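(* Let $I\subset\mathbb{R}$ be an interval and let $f,g:I\to\mathbb{R}$ be nowhere-vanishing $C^2$ functions, $\beta\in C^1(I,\mathbb{R})$, and $H_1,H_2:I\to\mathbb{R}$ continuous. Put $$a(t)=\frac{1}{4f}\Big(4\beta^2+2\dot\beta+2\beta\frac{\dot f}{f}-4\beta\frac{\dot g}{g}+(\ln|f|)_{tt}+g\Big(\frac1g\Big)_{tt}-(\ln|f|)_t(\ln|g|)_t\Big)$$ and $h(x,t)=a(t)x^2+H_1(t)x+H_2(t)+i\beta(t)$. Let $\epsilon,\epsilon_1\in\{1,-1\}$ with $\epsilon\, g(t)/f(t)>0$ on $I$, and let $T_1>0$, $T_2,\xi_0,\xi_1,\theta_0\in\mathbb{R}$. Choose differentiable functions on $I$ with $\dot B=2\beta$, $\dot P=\frac{g^2}{f}e^{-2B}$, $\dot{\mathcal I}=\frac{f}{g}e^{B}H_1$, $\dot J=\frac{g^2}{f}e^{-2B}\mathcal I$, $\dot L=\frac{g^2}{f}e^{-2B}\mathcal I^2$, $\dot M=H_2$, and define $$T(t)=T_1P(t)+T_2,\qquad X(x,t)=\epsilon_1\sqrt{T_1}\,\frac{g}{f}e^{-B}x-2\epsilon_1\sqrt{T_1}\,J+\xi_0T_1P+\xi_1,$$ $$R(t)=e^{-B}\Big(\epsilon T_1\frac{g}{f}\Big)^{1/2},$$ $$\theta(x,t)=\frac{1}{4f}\Big(2\beta+\frac{\dot f}{f}-\frac{\dot g}{g}\Big)x^2+\frac{g}{f}e^{-B}\Big(\mathcal I-\frac{\epsilon_1\xi_0\sqrt{T_1}}{2}\Big)x-L-\frac{\xi_0^2T_1}{4}P+\epsilon_1\xi_0\sqrt{T_1}\,J+M+\theta_0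 .$$ If $\tilde\psi(\tilde x,\tilde t)$ is a solution (continuously differentiable in $\tilde t$, twice continuously differentiable in $\tilde x$) of $$i\tilde\psi_{\tilde t}+\tilde\psi_{\tilde x\tilde x}+\epsilon|\tilde\psi|^2\tilde\psi=0$$ on a domain containing $\{(X(x,t),T(t)):x\in\mathbb{R},t\in I\}$, then $$\psi(x,t)=R(t)\,e^{i\theta(x,t)}\,\tilde\psi\big(X(x,t),T(t)\big)$$ is a solution on $\mathbb{R}\times I$ of $$i\psi_t+f(t)\psi_{xx}+g(t)|\psi|^2\psi+h(x,t)\psi=0 .$$
   Context: Here $\dot{}$ denotes $d/dt$. The functions $B,P,\mathcal I,J,L,M$ are any antiderivatives satisfying the stated differential relations (with $\mathcal I$ computed from the chosen $B$, $J,L$ from the chosen $B,\mathcal I$). *)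

theory Defs
  imports "HOL-Analysis.Analysis"
begin

text \<open>Regularity of a complex-valued function u(x,t) on a set S of the (x,t)-plane:
  ut, ux, uxx are the partial derivatives u_t, u_x, u_xx (taken within the
  horizontal / vertical slices of S, which for open S are ordinary derivatives),
  and u, u_t, u_x, u_xx are (jointly) continuous on S.\<close>
definition C12_partials ::
  "(real \<Rightarrow> real \<Rightarrow> complex) \<Rightarrow> (real \<times> real) set \<Rightarrow>
   (real \<Rightarrow> real \<Rightarrow> complex) \<Rightarrow> (real \<Rightarrow> real \<Rightarrow> complex) \<Rightarrow>
   (real \<Rightarrow> real \<Rightarrow> complex) \<Rightarrow> bool" where
  "C12_partials u S ut ux uxx \<longleftrightarrow>
     (\<forall>(x,t)\<in>S.
        ((\<lambda>s. u x s) has_vector_derivative ut x t) (at t within {s. (x,s) \<in> S}) \<and>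
        ((\<lambda>y. u y t) has_vector_derivative ux x t) (at x within {y. (y,t) \<in> S}) \<and>
        ((\<lambda>y. ux y t) has_vector_derivative uxx x t) (at x within {y. (y,t) \<in> S})) \<and>
     continuous_on S (\<lambda>(x,t). u x t) \<and>
     continuous_on S (\<lambda>(x,t). ut x t) \<and>
     continuous_on S (\<lambda>(x,t). ux x t) \<and>
     continuous_on S (\<lambda>(x,t). uxx x t)"

definition nls_solution :: "real \<Rightarrow> (real \<Rightarrow> real \<Rightarrow> complex) \<Rightarrow> (real \<times> real) set \<Rightarrow> bool" where
  "nls_solution eps u S \<longleftrightarrow>
     (\<exists>ut ux uxx. C12_partials u S ut ux uxx \<and>
        (\<forall>(x,t)\<in>S. \<i> * ut x t + uxx x t
                    + complex_of_real (eps * (cmod (u x t))\<^sup>2) * u x t = 0))"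

definition vnls_solution ::
  "(real \<Rightarrow> real) \<Rightarrow> (real \<Rightarrow> real) \<Rightarrow> (real \<Rightarrow> real \<Rightarrow> complex) \<Rightarrow>
   (real \<Rightarrow> real \<Rightarrow> complex) \<Rightarrow> (real \<times> real) set \<Rightarrow> bool" where
  "vnls_solution f g h u S \<longleftrightarrow>
     (\<exists>ut ux uxx. C12_partials u S ut ux uxx \<and>
        (\<forall>(x,t)\<in>S. \<i> * ut x t + complex_of_real (f t) * uxx x t
                    + complex_of_real (g t * (cmod (u x t))\<^sup>2) * u x t
                    + h x t * u x t = 0))"

end

theory Submission
  imports Defs
begin

text \<open>Write \<open>\<psi>(x,t) = R exp(i \<phi>) \<Psi>(\<rho> x + X0, T)\<close> with \<open>\<phi> = \<alpha> x\<^sup>2 + \<theta>1 x + \<theta>2\<close>, where all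
  coefficients depend on \<open>t\<close> only and \<open>\<Psi>\<close> solves the constant-coefficient NLS. The \<open>\<Psi>\<^sub>X\<close> terms cancel when \<open>\<rho>' = -4f\<alpha>\<rho>\<close> and \<open>X0' = -2f\<theta>1\<rho>\<close>; with
  \<open>T' = f\<rho>\<^sup>2\<close> the \<open>\<Psi>\<^sub>T\<close> and \<open>\<Psi>\<^sub>X\<^sub>X\<close> terms assemble into the NLS operator applied to \<open>\<Psi>\<close>,
  whose cubic term matches \<open>g|\<psi>|\<^sup>2\<psi>\<close> when \<open>gR\<^sup>2 = \<epsilon>f\<rho>\<^sup>2\<close>; the remaining multiples of \<open>\<Psi>\<close>
  vanish when \<open>\<alpha>\<close> solves the Riccati equation \<open>\<alpha>' + 4f\<alpha>\<^sup>2 = a\<close>, \<open>\<theta>1' + 4f\<alpha>\<theta>1 = H1\<close>,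
  \<open>\<theta>2' + f\<theta>1\<^sup>2 = H2\<close> and \<open>R' = -(2f\<alpha> + \<beta>)R\<close>.
  The transformation of the theorem is an explicit solution of this ODE system:
  \<open>\<rho> = \<epsilon>1 sqrt T1 (g/f) exp(-B)\<close>, the primitives \<open>P, \<I>, J, L, M\<close> integrate the linear
  equations, and the formula for \<open>a\<close> is exactly what the Riccati equation demands of
  \<open>\<alpha> = (2\<beta> + f'/f - g'/g)/(4f)\<close>.\<close>

lemma has_vector_derivative_exp_i:
  fixes \<phi> :: "real \<Rightarrow> real"
  assumes "(\<phi> has_real_derivative d) (at x within S)"
  shows "((\<lambda>s. exp (\<i> * of_real (\<phi> s))) has_vector_derivative
           exp (\<i> * of_real (\<phi> x)) * (\<i> * of_real d)) (at x within S)"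
proof -
  have "((\<lambda>s. \<i> * complex_of_real (\<phi> s)) has_vector_derivative \<i> * of_real d) (at x within S)"
    by (intro has_vector_derivative_mult_right has_vector_derivative_of_real assms)
  moreover have "(exp has_field_derivative exp (\<i> * of_real (\<phi> x)))
      (at (\<i> * of_real (\<phi> x)) within (\<lambda>s. \<i> * complex_of_real (\<phi> s)) ` S)"
    by (rule has_field_derivative_at_within) (rule DERIV_exp)
  ultimately show ?thesis
    using field_vector_diff_chain_within by (fastforce simp: o_def mult.commute)
qed

lemma has_vector_derivative_compose_real:
  fixes \<phi> :: "real \<Rightarrow> real" and G :: "real \<Rightarrow> 'a::real_normed_field"
  assumes "(\<phi> has_real_derivative d) (at x within S)"
    and "(G has_vector_derivative G') (at (\<phi> x))"
  shows "((\<lambda>s. G (\<phi> s)) has_vector_derivative of_real d * G') (at x within S)"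
proof -
  have "(\<phi> has_vector_derivative d) (at x within S)"
    using assms(1) by (simp add: has_real_derivative_iff_has_vector_derivative)
  moreover have "(G has_vector_derivative G') (at (\<phi> x) within \<phi> ` S)"
    using assms(2) by (rule has_vector_derivative_at_within)
  ultimately show ?thesis
    using vector_diff_chain_within by (fastforce simp: o_def scaleR_conv_of_real)
qed

lemma has_vector_derivative_compose_pair:
  fixes \<phi> \<tau> :: "real \<Rightarrow> real" and G :: "real \<Rightarrow> real \<Rightarrow> 'a::real_normed_field"
  assumes "(\<phi> has_real_derivative d\<phi>) (at x within S)"
    and "(\<tau> has_real_derivative d\<tau>) (at x within S)"
    and "((\<lambda>(y, s). G y s) has_derivative (\<lambda>(h, k). h *\<^sub>R G\<^sub>y + k *\<^sub>R G\<^sub>s)) (at (\<phi> x, \<tau> x))"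
  shows "((\<lambda>s. G (\<phi> s) (\<tau> s)) has_vector_derivative of_real d\<phi> * G\<^sub>y + of_real d\<tau> * G\<^sub>s)
           (at x within S)"
proof -
  have "((\<lambda>s. (\<phi> s, \<tau> s)) has_vector_derivative (d\<phi>, d\<tau>)) (at x within S)"
    using assms(1,2)
    by (intro has_vector_derivative_Pair) (simp_all add: has_real_derivative_iff_has_vector_derivative)
  moreover have "((\<lambda>(y, s). G y s) has_derivative (\<lambda>(h, k). h *\<^sub>R G\<^sub>y + k *\<^sub>R G\<^sub>s))
      (at (\<phi> x, \<tau> x) within (\<lambda>s. (\<phi> s, \<tau> s)) ` S)"
    using assms(3) by (rule has_derivative_at_withinI)
  ultimately show ?thesis
    using vector_derivative_diff_chain_within by (fastforce simp: o_def scaleR_conv_of_real)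
qed

lemma open_slice: "open D \<Longrightarrow> open {y. (y, t) \<in> D}"
  using open_vimage[of D "\<lambda>y. (y, t)"] by (simp add: vimage_def continuous_on_Pair)

lemma C12_partials_x_derivatives:
  assumes u: "C12_partials u D u\<^sub>t u\<^sub>x u\<^sub>x\<^sub>x" and D: "open D" "(x, t) \<in> D"
  shows "((\<lambda>y. u y t) has_vector_derivative u\<^sub>x x t) (at x)"
    and "((\<lambda>y. u\<^sub>x y t) has_vector_derivative u\<^sub>x\<^sub>x x t) (at x)"
  using u D has_vector_derivative_within_open[OF _ open_slice[OF D(1)]]
  unfolding C12_partials_def by fastforce+

text \<open>has_derivative_partialsI needs a convex set in the \<open>t\<close>-direction; a ball around \<open>t\<close>
  inside \<open>D\<close> provides it.\<close>
lemma C12_partials_has_derivative: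
  assumes u: "C12_partials u D u\<^sub>t u\<^sub>x u\<^sub>x\<^sub>x" and D: "open D" and xt: "(x, t) \<in> D"
  shows "((\<lambda>(y, s). u y s) has_derivative (\<lambda>(h, k). h *\<^sub>R u\<^sub>x x t + k *\<^sub>R u\<^sub>t x t)) (at (x, t))"
proof -
  have dt: "\<And>y s. (y, s) \<in> D \<Longrightarrow> ((\<lambda>s. u y s) has_vector_derivative u\<^sub>t y s) (at s within {s. (y, s) \<in> D})"
    and ct: "continuous_on D (\<lambda>(y, s). u\<^sub>t y s)"
    using u unfolding C12_partials_def by auto
  obtain A B where AB: "open A" "open B" "(x, t) \<in> A \<times> B" "A \<times> B \<subseteq> D"
    using open_prod_elim[OF D xt] by blast
  obtain r where r: "r > 0" "ball t r \<subseteq> B"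
    using AB(2,3) open_contains_ball by blast
  have sub: "A \<times> ball t r \<subseteq> D"
    using AB r by auto
  have "((\<lambda>(y, s). u y s) has_derivative (\<lambda>(h, k). h *\<^sub>R u\<^sub>x x t + blinfun_scaleR_left (u\<^sub>t x t) k))
      (at (x, t) within A \<times> ball t r)"
  proof (rule has_derivative_partialsI)
    show "((\<lambda>y. u y t) has_derivative (\<lambda>h. h *\<^sub>R u\<^sub>x x t)) (at x within A)"
      using C12_partials_x_derivatives(1)[OF u D xt]
      by (simp add: has_vector_derivative_def has_derivative_at_withinI)
  next
    fix y s assume "y \<in> A" "s \<in> ball t r"
    then have "((\<lambda>s. u y s) has_vector_derivative u\<^sub>t y s) (at s within ball t r)"
      using sub by (intro has_vector_derivative_within_subset[OF dt]) auto
    then show "((\<lambda>s. u y s) has_derivative blinfun_apply (blinfun_scaleR_left (u\<^sub>t y s)))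
        (at s within ball t r)"
      by (simp add: has_vector_derivative_def)
  next
    have "continuous (at (x, t)) (\<lambda>(y, s). u\<^sub>t y s)"
      using ct D xt by (simp add: continuous_on_eq_continuous_at)
    then show "continuous (at (x, t) within A \<times> ball t r) (\<lambda>(y, s). blinfun_scaleR_left (u\<^sub>t y s))"
      by (auto simp: case_prod_unfold intro!: continuous_at_imp_continuous_within continuous_intros
          bounded_linear.continuous[OF bounded_linear_blinfun_scaleR_left])
  qed (use r in auto)
  then show ?thesis
    using at_within_open[of "(x, t)" "A \<times> ball t r"] AB r by (simp add: open_Times)
qed

lemma continuous_on_snd_compose:
  "continuous_on S \<phi> \<Longrightarrow> continuous_on (A \<times> S) (\<lambda>p. \<phi> (snd p))"
  by (rule continuous_on_compose2[OF _ continuous_on_snd]) auto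

lemma has_real_derivative_sqrt_log:
  assumes "(q has_real_derivative q t * k) (at t within S)" and "q t > 0"
  shows "((\<lambda>s. sqrt (q s)) has_real_derivative sqrt (q t) * k / 2) (at t within S)"
  using assms(2)
  by (intro DERIV_cong[OF DERIV_chain2[OF DERIV_real_sqrt[OF assms(2)] assms(1)]])
    (simp add: field_simps real_div_sqrt)

locale similarity_reduction =
  fixes I :: "real set" and D :: "(real \<times> real) set" and \<epsilon> :: real
    and \<psi> \<psi>\<^sub>t \<psi>\<^sub>x \<psi>\<^sub>x\<^sub>x :: "real \<Rightarrow> real \<Rightarrow> complex"
    and f g a H1 H2 \<gamma> :: "real \<Rightarrow> real"
    and R \<alpha> \<theta>1 \<theta>2 \<rho> X0 T :: "real \<Rightarrow> real"
  assumes open_D: "open D"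
    and maps_into_D: "\<And>x t. t \<in> I \<Longrightarrow> (\<rho> t * x + X0 t, T t) \<in> D"
    and \<psi>_partials: "C12_partials \<psi> D \<psi>\<^sub>t \<psi>\<^sub>x \<psi>\<^sub>x\<^sub>x"
    and \<psi>_nls: "\<And>y s. (y, s) \<in> D \<Longrightarrow>
      \<i> * \<psi>\<^sub>t y s + \<psi>\<^sub>x\<^sub>x y s + of_real (\<epsilon> * (cmod (\<psi> y s))\<^sup>2) * \<psi> y s = 0"
    and continuous_coefficients:
      "continuous_on I f" "continuous_on I a" "continuous_on I H1" "continuous_on I H2"
      "continuous_on I \<gamma>"
    and R_deriv: "\<And>t. t \<in> I \<Longrightarrow>
      (R has_real_derivative - (2 * f t * \<alpha> t + \<gamma> t) * R t) (at t within I)"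
    and \<alpha>_deriv: "\<And>t. t \<in> I \<Longrightarrow>
      (\<alpha> has_real_derivative a t - 4 * f t * (\<alpha> t)\<^sup>2) (at t within I)"
    and \<theta>1_deriv: "\<And>t. t \<in> I \<Longrightarrow>
      (\<theta>1 has_real_derivative H1 t - 4 * f t * \<alpha> t * \<theta>1 t) (at t within I)"
    and \<theta>2_deriv: "\<And>t. t \<in> I \<Longrightarrow>
      (\<theta>2 has_real_derivative H2 t - f t * (\<theta>1 t)\<^sup>2) (at t within I)"
    and \<rho>_deriv: "\<And>t. t \<in> I \<Longrightarrow>
      (\<rho> has_real_derivative - 4 * f t * \<alpha> t * \<rho> t) (at t within I)"
    and X0_deriv: "\<And>t. t \<in> I \<Longrightarrow>
      (X0 has_real_derivative - 2 * f t * \<theta>1 t * \<rho> t) (at t within I)"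
    and T_deriv: "\<And>t. t \<in> I \<Longrightarrow> (T has_real_derivative f t * (\<rho> t)\<^sup>2) (at t within I)"
    and amplitude_balance: "\<And>t. t \<in> I \<Longrightarrow> g t * (R t)\<^sup>2 = \<epsilon> * f t * (\<rho> t)\<^sup>2"
begin

definition X :: "real \<Rightarrow> real \<Rightarrow> real" where
  "X x t = \<rho> t * x + X0 t"

definition phase :: "real \<Rightarrow> real \<Rightarrow> real" where
  "phase x t = \<alpha> t * x\<^sup>2 + \<theta>1 t * x + \<theta>2 t"

definition pullback :: "(real \<Rightarrow> real \<Rightarrow> complex) \<Rightarrow> real \<Rightarrow> real \<Rightarrow> complex" where
  "pullback F x t = F (X x t) (T t)"

definition u :: "real \<Rightarrow> real \<Rightarrow> complex" where
  "u x t = of_real (R t) * exp (\<i> * of_real (phase x t)) * pullback \<psi> x t"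

definition u\<^sub>t :: "real \<Rightarrow> real \<Rightarrow> complex" where
  "u\<^sub>t x t = exp (\<i> * of_real (phase x t)) * of_real (R t) *
     (- of_real (2 * f t * \<alpha> t + \<gamma> t) * pullback \<psi> x t
      + \<i> * of_real ((a t - 4 * f t * (\<alpha> t)\<^sup>2) * x\<^sup>2 + (H1 t - 4 * f t * \<alpha> t * \<theta>1 t) * x
                      + H2 t - f t * (\<theta>1 t)\<^sup>2) * pullback \<psi> x t
      - of_real (2 * f t * (2 * \<alpha> t * x + \<theta>1 t) * \<rho> t) * pullback \<psi>\<^sub>x x t
      + of_real (f t * (\<rho> t)\<^sup>2) * pullback \<psi>\<^sub>t x t)"

definition u\<^sub>x :: "real \<Rightarrow> real \<Rightarrow> complex" where
  "u\<^sub>x x t = exp (\<i> * of_real (phase x t)) * of_real (R t) *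
     (\<i> * of_real (2 * \<alpha> t * x + \<theta>1 t) * pullback \<psi> x t + of_real (\<rho> t) * pullback \<psi>\<^sub>x x t)"

definition u\<^sub>x\<^sub>x :: "real \<Rightarrow> real \<Rightarrow> complex" where
  "u\<^sub>x\<^sub>x x t = exp (\<i> * of_real (phase x t)) * of_real (R t) *
     ((\<i> * of_real (2 * \<alpha> t) - of_real ((2 * \<alpha> t * x + \<theta>1 t)\<^sup>2)) * pullback \<psi> x t
      + 2 * \<i> * of_real ((2 * \<alpha> t * x + \<theta>1 t) * \<rho> t) * pullback \<psi>\<^sub>x x t
      + of_real ((\<rho> t)\<^sup>2) * pullback \<psi>\<^sub>x\<^sub>x x t)"

lemma pullback_has_vector_derivative_t:
  assumes "t \<in> I"
  shows "((\<lambda>s. pullback \<psi> x s) has_vector_derivative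
           - of_real (2 * f t * (2 * \<alpha> t * x + \<theta>1 t) * \<rho> t) * pullback \<psi>\<^sub>x x t
           + of_real (f t * (\<rho> t)\<^sup>2) * pullback \<psi>\<^sub>t x t) (at t within I)"
proof -
  have "((\<lambda>s. X x s) has_real_derivative - 2 * f t * (2 * \<alpha> t * x + \<theta>1 t) * \<rho> t) (at t within I)"
    unfolding X_def using assms
    by (auto intro!: derivative_eq_intros \<rho>_deriv X0_deriv simp: algebra_simps)
  from has_vector_derivative_compose_pair[OF this T_deriv[OF assms]
      C12_partials_has_derivative[OF \<psi>_partials open_D maps_into_D[OF assms, folded X_def]]]
  show ?thesis
    unfolding pullback_def by simp
qed

lemma u_has_vector_derivative_t:
  assumes "t \<in> I"
  shows "((\<lambda>s. u x s) has_vector_derivative u\<^sub>t x t) (at t within I)"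
proof -
  have "((\<lambda>s. phase x s) has_real_derivative (a t - 4 * f t * (\<alpha> t)\<^sup>2) * x\<^sup>2
      + (H1 t - 4 * f t * \<alpha> t * \<theta>1 t) * x + H2 t - f t * (\<theta>1 t)\<^sup>2) (at t within I)"
    unfolding phase_def using assms
    by (auto intro!: derivative_eq_intros \<alpha>_deriv \<theta>1_deriv \<theta>2_deriv)
  note d_exp = has_vector_derivative_exp_i[OF this]
  note d_R = has_vector_derivative_of_real[OF R_deriv[OF assms]]
  show ?thesis
    unfolding u_def
    by (rule has_vector_derivative_eq_rhs[OF has_vector_derivative_mult[OF
          has_vector_derivative_mult[OF d_R d_exp] pullback_has_vector_derivative_t[OF assms]]])
      (simp add: u\<^sub>t_def algebra_simps)
qed

lemma pullback_has_vector_derivative_x: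
  assumes "t \<in> I"
  shows "((\<lambda>y. pullback \<psi> y t) has_vector_derivative of_real (\<rho> t) * pullback \<psi>\<^sub>x x t) (at x)"
    and "((\<lambda>y. pullback \<psi>\<^sub>x y t) has_vector_derivative of_real (\<rho> t) * pullback \<psi>\<^sub>x\<^sub>x x t) (at x)"
proof -
  have X: "((\<lambda>y. X y t) has_real_derivative \<rho> t) (at x)"
    unfolding X_def by (auto intro!: derivative_eq_intros)
  note \<psi>_x = C12_partials_x_derivatives[OF \<psi>_partials open_D maps_into_D[OF assms, folded X_def]]
  show "((\<lambda>y. pullback \<psi> y t) has_vector_derivative of_real (\<rho> t) * pullback \<psi>\<^sub>x x t) (at x)"
    "((\<lambda>y. pullback \<psi>\<^sub>x y t) has_vector_derivative of_real (\<rho> t) * pullback \<psi>\<^sub>x\<^sub>x x t) (at x)"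
    unfolding pullback_def by (rule has_vector_derivative_compose_real[OF X \<psi>_x(1)],
        rule has_vector_derivative_compose_real[OF X \<psi>_x(2)])
qed

lemma exp_phase_has_vector_derivative_x:
  "((\<lambda>y. exp (\<i> * of_real (phase y t))) has_vector_derivative
     exp (\<i> * of_real (phase x t)) * (\<i> * of_real (2 * \<alpha> t * x + \<theta>1 t))) (at x)"
  unfolding phase_def
  by (rule has_vector_derivative_exp_i) (auto intro!: derivative_eq_intros)

lemma u_has_vector_derivative_x:
  assumes "t \<in> I"
  shows "((\<lambda>y. u y t) has_vector_derivative u\<^sub>x x t) (at x)"
  unfolding u_def
  by (rule has_vector_derivative_eq_rhs[OF has_vector_derivative_mult[OF
        has_vector_derivative_mult_right[OF exp_phase_has_vector_derivative_x]
        pullback_has_vector_derivative_x(1)[OF assms]]])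
    (simp add: u\<^sub>x_def algebra_simps)

lemma u\<^sub>x_has_vector_derivative_x:
  assumes "t \<in> I"
  shows "((\<lambda>y. u\<^sub>x y t) has_vector_derivative u\<^sub>x\<^sub>x x t) (at x)"
proof -
  have "((\<lambda>y. \<i> * of_real (2 * \<alpha> t * y + \<theta>1 t)) has_vector_derivative \<i> * of_real (2 * \<alpha> t)) (at x)"
    by (intro has_vector_derivative_mult_right has_vector_derivative_of_real)
      (auto intro!: derivative_eq_intros)
  note d_factor = has_vector_derivative_add[OF has_vector_derivative_mult[OF this
        pullback_has_vector_derivative_x(1)[OF assms]]
      has_vector_derivative_mult_right[OF pullback_has_vector_derivative_x(2)[OF assms]]]
  show ?thesis
    unfolding u\<^sub>x_def
    by (rule has_vector_derivative_eq_rhs[OF has_vector_derivative_mult[OF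
          has_vector_derivative_mult_left[OF exp_phase_has_vector_derivative_x] d_factor]])
      (simp add: u\<^sub>x\<^sub>x_def algebra_simps power2_eq_square)
qed

lemma u_vnls_equation:
  assumes "t \<in> I"
  shows "\<i> * u\<^sub>t x t + of_real (f t) * u\<^sub>x\<^sub>x x t + of_real (g t * (cmod (u x t))\<^sup>2) * u x t
         + (of_real (a t * x\<^sup>2 + H1 t * x + H2 t) + \<i> * of_real (\<gamma> t)) * u x t = 0"
proof -
  have nls: "pullback \<psi>\<^sub>x\<^sub>x x t = - \<i> * pullback \<psi>\<^sub>t x t
      - of_real (\<epsilon> * (cmod (pullback \<psi> x t))\<^sup>2) * pullback \<psi> x t"
    using \<psi>_nls[OF maps_into_D[OF assms]] unfolding pullback_def X_def
    by (simp add: algebra_simps add_eq_0_iff2)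
  have "g t * (cmod (u x t))\<^sup>2 = \<epsilon> * f t * (\<rho> t)\<^sup>2 * (cmod (pullback \<psi> x t))\<^sup>2"
    using amplitude_balance[OF assms] unfolding u_def
    by (simp add: norm_mult power_mult_distrib)
  then show ?thesis
    unfolding u\<^sub>t_def u\<^sub>x\<^sub>x_def nls
    by (simp add: u_def algebra_simps power2_eq_square)
qed

lemma continuous_on_unknowns:
  "continuous_on I R" "continuous_on I \<alpha>" "continuous_on I \<theta>1" "continuous_on I \<theta>2"
  "continuous_on I \<rho>" "continuous_on I X0" "continuous_on I T"
  by (rule DERIV_continuous_on[OF R_deriv] DERIV_continuous_on[OF \<alpha>_deriv]
      DERIV_continuous_on[OF \<theta>1_deriv] DERIV_continuous_on[OF \<theta>2_deriv]
      DERIV_continuous_on[OF \<rho>_deriv] DERIV_continuous_on[OF X0_deriv]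
      DERIV_continuous_on[OF T_deriv], assumption)+

lemma continuous_on_pullback:
  assumes "continuous_on D (\<lambda>(y, s). F y s)"
  shows "continuous_on (UNIV \<times> I) (\<lambda>(x, t). pullback F x t)"
proof -
  have "continuous_on (UNIV \<times> I) (\<lambda>(x, t). (X x t, T t))"
    unfolding X_def case_prod_unfold
    by (intro continuous_intros continuous_on_snd_compose continuous_on_unknowns)
  moreover have "(\<lambda>(x, t). (X x t, T t)) ` (UNIV \<times> I) \<subseteq> D"
    using maps_into_D by (auto simp: X_def)
  ultimately show ?thesis
    using continuous_on_compose2[OF assms] unfolding pullback_def case_prod_unfold by fastforce
qed

lemma u_C12_partials: "C12_partials u (UNIV \<times> I) u\<^sub>t u\<^sub>x u\<^sub>x\<^sub>x"
proof -
  have pullbacks: "continuous_on (UNIV \<times> I) (\<lambda>p. pullback F (fst p) (snd p))"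
    if "F \<in> {\<psi>, \<psi>\<^sub>t, \<psi>\<^sub>x, \<psi>\<^sub>x\<^sub>x}" for F
    using continuous_on_pullback[of F] that \<psi>_partials
    unfolding C12_partials_def case_prod_unfold by auto
  note continuous = continuous_on_snd_compose continuous_on_unknowns continuous_coefficients pullbacks
  have "continuous_on (UNIV \<times> I) (\<lambda>(x, t). u x t)"
    unfolding u_def phase_def case_prod_unfold by (intro continuous_intros continuous) simp_all
  moreover have "continuous_on (UNIV \<times> I) (\<lambda>(x, t). u\<^sub>t x t)"
    unfolding u\<^sub>t_def phase_def case_prod_unfold by (intro continuous_intros continuous) simp_all
  moreover have "continuous_on (UNIV \<times> I) (\<lambda>(x, t). u\<^sub>x x t)"
    unfolding u\<^sub>x_def phase_def case_prod_unfold by (intro continuous_intros continuous) simp_all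
  moreover have "continuous_on (UNIV \<times> I) (\<lambda>(x, t). u\<^sub>x\<^sub>x x t)"
    unfolding u\<^sub>x\<^sub>x_def phase_def case_prod_unfold by (intro continuous_intros continuous) simp_all
  ultimately show ?thesis
    unfolding C12_partials_def
    using u_has_vector_derivative_t u_has_vector_derivative_x u\<^sub>x_has_vector_derivative_x by auto
qed

theorem vnls_solution:
  "vnls_solution f g (\<lambda>x t. of_real (a t * x\<^sup>2 + H1 t * x + H2 t) + \<i> * of_real (\<gamma> t)) u (UNIV \<times> I)"
  unfolding vnls_solution_def
  using u_C12_partials u_vnls_equation by blast

end

locale vnls_coefficients =
  fixes I :: "real set"
    and f f' f'' g g' g'' \<beta> \<beta>' H1 H2 B P \<I> J L M :: "real \<Rightarrow> real"
    and \<epsilon> \<epsilon>1 T1 T2 \<xi>0 \<xi>1 \<theta>0 :: real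
  assumes f_deriv: "\<And>t. t \<in> I \<Longrightarrow> (f has_real_derivative f' t) (at t within I)"
    and f'_deriv: "\<And>t. t \<in> I \<Longrightarrow> (f' has_real_derivative f'' t) (at t within I)"
    and f''_cont: "continuous_on I f''"
    and g_deriv: "\<And>t. t \<in> I \<Longrightarrow> (g has_real_derivative g' t) (at t within I)"
    and g'_deriv: "\<And>t. t \<in> I \<Longrightarrow> (g' has_real_derivative g'' t) (at t within I)"
    and g''_cont: "continuous_on I g''"
    and f_nz: "\<And>t. t \<in> I \<Longrightarrow> f t \<noteq> 0"
    and g_nz: "\<And>t. t \<in> I \<Longrightarrow> g t \<noteq> 0"
    and \<beta>_deriv: "\<And>t. t \<in> I \<Longrightarrow> (\<beta> has_real_derivative \<beta>' t) (at t within I)"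
    and \<beta>'_cont: "continuous_on I \<beta>'"
    and H1_cont: "continuous_on I H1"
    and H2_cont: "continuous_on I H2"
    and \<epsilon>1: "\<epsilon>1 \<in> {1, -1}"
    and sign: "\<And>t. t \<in> I \<Longrightarrow> \<epsilon> * g t / f t > 0"
    and T1: "T1 > 0"
    and B_deriv: "\<And>t. t \<in> I \<Longrightarrow> (B has_real_derivative 2 * \<beta> t) (at t within I)"
    and P_deriv: "\<And>t. t \<in> I \<Longrightarrow>
       (P has_real_derivative (g t)\<^sup>2 / f t * exp (- 2 * B t)) (at t within I)"
    and \<I>_deriv: "\<And>t. t \<in> I \<Longrightarrow>
       (\<I> has_real_derivative f t / g t * exp (B t) * H1 t) (at t within I)"
    and J_deriv: "\<And>t. t \<in> I \<Longrightarrow>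
       (J has_real_derivative (g t)\<^sup>2 / f t * exp (- 2 * B t) * \<I> t) (at t within I)"
    and L_deriv: "\<And>t. t \<in> I \<Longrightarrow>
       (L has_real_derivative (g t)\<^sup>2 / f t * exp (- 2 * B t) * (\<I> t)\<^sup>2) (at t within I)"
    and M_deriv: "\<And>t. t \<in> I \<Longrightarrow> (M has_real_derivative H2 t) (at t within I)"
begin

definition quadratic_potential :: "real \<Rightarrow> real" where
  "quadratic_potential t = 1 / (4 * f t) *
     (4 * (\<beta> t)\<^sup>2 + 2 * \<beta>' t + 2 * \<beta> t * f' t / f t - 4 * \<beta> t * g' t / g t
      + (f'' t / f t - (f' t / f t)\<^sup>2)
      + (- g'' t / g t + 2 * (g' t / g t)\<^sup>2)
      - (f' t / f t) * (g' t / g t))"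

definition chirp :: "real \<Rightarrow> real" where
  "chirp t = 1 / (4 * f t) * (2 * \<beta> t + f' t / f t - g' t / g t)"

definition amplitude :: "real \<Rightarrow> real" where
  "amplitude t = exp (- B t) * sqrt (\<epsilon> * T1 * (g t / f t))"

definition dilation :: "real \<Rightarrow> real" where
  "dilation t = \<epsilon>1 * sqrt T1 * (g t / f t) * exp (- B t)"

definition translation :: "real \<Rightarrow> real" where
  "translation t = - 2 * \<epsilon>1 * sqrt T1 * J t + \<xi>0 * T1 * P t + \<xi>1"

definition time_change :: "real \<Rightarrow> real" where
  "time_change t = T1 * P t + T2"

definition phase_slope :: "real \<Rightarrow> real" where
  "phase_slope t = g t / f t * exp (- B t) * (\<I> t - \<epsilon>1 * \<xi>0 * sqrt T1 / 2)"

definition phase_offset :: "real \<Rightarrow> real" where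
  "phase_offset t = - L t - \<xi>0\<^sup>2 * T1 / 4 * P t + \<epsilon>1 * \<xi>0 * sqrt T1 * J t + M t + \<theta>0"

lemma \<epsilon>1_sq: "\<epsilon>1\<^sup>2 = 1"
  using \<epsilon>1 by auto

lemma chirp_riccati:
  assumes "t \<in> I"
  shows "(chirp has_real_derivative quadratic_potential t - 4 * f t * (chirp t)\<^sup>2) (at t within I)"
  using assms f_nz[OF assms] g_nz[OF assms] unfolding chirp_def quadratic_potential_def
  by (auto intro!: derivative_eq_intros f_deriv f'_deriv g_deriv g'_deriv \<beta>_deriv
      simp: field_simps power2_eq_square)

lemma dilation_deriv:
  assumes "t \<in> I"
  shows "(dilation has_real_derivative - 4 * f t * chirp t * dilation t) (at t within I)"
  using assms f_nz[OF assms] g_nz[OF assms] unfolding dilation_def chirp_def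
  by (auto intro!: derivative_eq_intros f_deriv g_deriv B_deriv simp: field_simps power2_eq_square)

lemma amplitude_radicand_pos:
  assumes "t \<in> I"
  shows "\<epsilon> * T1 * (g t / f t) > 0"
proof -
  have "\<epsilon> * T1 * (g t / f t) = T1 * (\<epsilon> * g t / f t)"
    by simp
  also have "\<dots> > 0"
    by (rule mult_pos_pos[OF T1 sign[OF assms]])
  finally show ?thesis .
qed

lemma amplitude_sq:
  assumes "t \<in> I"
  shows "(amplitude t)\<^sup>2 = (exp (- B t))\<^sup>2 * (\<epsilon> * T1 * (g t / f t))"
  using amplitude_radicand_pos[OF assms] unfolding amplitude_def
  by (simp add: power_mult_distrib)

lemma dilation_sq: "(dilation t)\<^sup>2 = T1 * (g t / f t * exp (- B t))\<^sup>2"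
  using \<epsilon>1_sq T1 unfolding dilation_def by (simp add: power_mult_distrib power_divide)

lemma amplitude_deriv:
  assumes "t \<in> I"
  shows "(amplitude has_real_derivative - (2 * f t * chirp t + \<beta> t) * amplitude t) (at t within I)"
proof -
  have "((\<lambda>s. \<epsilon> * T1 * (g s / f s)) has_real_derivative
      \<epsilon> * T1 * (g t / f t) * (g' t / g t - f' t / f t)) (at t within I)"
    using assms f_nz[OF assms] g_nz[OF assms]
    by (auto intro!: derivative_eq_intros f_deriv g_deriv simp: field_simps power2_eq_square)
  note radical = has_real_derivative_sqrt_log[OF this amplitude_radicand_pos[OF assms]]
  have "((\<lambda>s. exp (- B s)) has_real_derivative - 2 * \<beta> t * exp (- B t)) (at t within I)"
    using assms by (auto intro!: derivative_eq_intros B_deriv)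
  from DERIV_mult[OF this radical] show ?thesis
    unfolding amplitude_def chirp_def
    by (rule DERIV_cong) (use f_nz[OF assms] g_nz[OF assms] in \<open>simp add: field_simps\<close>)
qed

lemma translation_deriv:
  assumes "t \<in> I"
  shows "(translation has_real_derivative - 2 * f t * phase_slope t * dilation t) (at t within I)"
  using assms f_nz[OF assms] \<epsilon>1_sq T1 unfolding translation_def phase_slope_def dilation_def
  by (auto intro!: derivative_eq_intros J_deriv P_deriv
      simp: field_simps power2_eq_square simp flip: exp_add)

lemma time_change_deriv:
  assumes "t \<in> I"
  shows "(time_change has_real_derivative f t * (dilation t)\<^sup>2) (at t within I)"
  using assms f_nz[OF assms] \<epsilon>1_sq T1 unfolding time_change_def dilation_def
  by (auto intro!: derivative_eq_intros P_deriv simp: field_simps power2_eq_square simp flip: exp_add)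

lemma phase_slope_deriv:
  assumes "t \<in> I"
  shows "(phase_slope has_real_derivative H1 t - 4 * f t * chirp t * phase_slope t) (at t within I)"
  using assms f_nz[OF assms] g_nz[OF assms] unfolding phase_slope_def chirp_def
  by (auto intro!: derivative_eq_intros f_deriv g_deriv B_deriv \<I>_deriv
      simp: field_simps power2_eq_square simp flip: exp_add)

lemma phase_offset_deriv:
  assumes "t \<in> I"
  shows "(phase_offset has_real_derivative H2 t - f t * (phase_slope t)\<^sup>2) (at t within I)"
  using assms f_nz[OF assms] \<epsilon>1_sq T1 unfolding phase_offset_def phase_slope_def
  by (auto intro!: derivative_eq_intros L_deriv P_deriv J_deriv M_deriv
      simp: field_simps power2_eq_square simp flip: exp_add)

lemma amplitude_balance:
  assumes "t \<in> I"
  shows "g t * (amplitude t)\<^sup>2 = \<epsilon> * f t * (dilation t)\<^sup>2"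
  using f_nz[OF assms] unfolding amplitude_sq[OF assms] dilation_sq
  by (simp add: field_simps power2_eq_square)

lemma continuous_on_quadratic_potential: "continuous_on I quadratic_potential"
proof -
  have "continuous_on I f" "continuous_on I f'" "continuous_on I g" "continuous_on I g'"
    "continuous_on I \<beta>"
    by (rule DERIV_continuous_on[OF f_deriv] DERIV_continuous_on[OF f'_deriv]
        DERIV_continuous_on[OF g_deriv] DERIV_continuous_on[OF g'_deriv]
        DERIV_continuous_on[OF \<beta>_deriv], assumption)+
  then show ?thesis
    using f_nz g_nz unfolding quadratic_potential_def
    by (intro continuous_intros f''_cont g''_cont \<beta>'_cont) auto
qed

lemma similarity_reduction_instance:
  assumes "open D" and "\<And>x t. t \<in> I \<Longrightarrow> (dilation t * x + translation t, time_change t) \<in> D"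
    and "C12_partials \<psi> D \<psi>\<^sub>t \<psi>\<^sub>x \<psi>\<^sub>x\<^sub>x"
    and "\<And>y s. (y, s) \<in> D \<Longrightarrow>
      \<i> * \<psi>\<^sub>t y s + \<psi>\<^sub>x\<^sub>x y s + of_real (\<epsilon> * (cmod (\<psi> y s))\<^sup>2) * \<psi> y s = 0"
  shows "similarity_reduction I D \<epsilon> \<psi> \<psi>\<^sub>t \<psi>\<^sub>x \<psi>\<^sub>x\<^sub>x f g quadratic_potential H1 H2 \<beta>
           amplitude chirp phase_slope phase_offset dilation translation time_change"
proof unfold_locales
  show "continuous_on I f" "continuous_on I \<beta>"
    by (rule DERIV_continuous_on[OF f_deriv] DERIV_continuous_on[OF \<beta>_deriv], assumption)+
qed (use assms continuous_on_quadratic_potential H1_cont H2_cont chirp_riccati dilation_deriv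
      amplitude_deriv translation_deriv time_change_deriv phase_slope_deriv phase_offset_deriv
      amplitude_balance in auto)

end

theorem mainTheorem2:
  fixes I :: "real set"
    and f f' f'' g g' g'' \<beta> \<beta>' H1 H2 :: "real \<Rightarrow> real"
    and B P \<I> J L M :: "real \<Rightarrow> real"
    and \<epsilon> \<epsilon>1 T1 T2 \<xi>0 \<xi>1 \<theta>0 :: real
    and \<psi>t :: "real \<Rightarrow> real \<Rightarrow> complex"
    and D :: "(real \<times> real) set"
  assumes I: "is_interval I"
    and f_deriv: "\<And>t. t \<in> I \<Longrightarrow> (f has_real_derivative f' t) (at t within I)"
    and f'_deriv: "\<And>t. t \<in> I \<Longrightarrow> (f' has_real_derivative f'' t) (at t within I)"
    and f''_cont: "continuous_on I f''"
    and g_deriv: "\<And>t. t \<in> I \<Longrightarrow> (g has_real_derivative g' t) (at t within I)"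
    and g'_deriv: "\<And>t. t \<in> I \<Longrightarrow> (g' has_real_derivative g'' t) (at t within I)"
    and g''_cont: "continuous_on I g''"
    and f_nz: "\<And>t. t \<in> I \<Longrightarrow> f t \<noteq> 0"
    and g_nz: "\<And>t. t \<in> I \<Longrightarrow> g t \<noteq> 0"
    and \<beta>_deriv: "\<And>t. t \<in> I \<Longrightarrow> (\<beta> has_real_derivative \<beta>' t) (at t within I)"
    and \<beta>'_cont: "continuous_on I \<beta>'"
    and H1_cont: "continuous_on I H1"
    and H2_cont: "continuous_on I H2"
    and \<epsilon>: "\<epsilon> \<in> {1, -1}"
    and \<epsilon>1: "\<epsilon>1 \<in> {1, -1}"
    and sign: "\<And>t. t \<in> I \<Longrightarrow> \<epsilon> * g t / f t > 0"
    and T1: "T1 > 0"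
    and B_deriv: "\<And>t. t \<in> I \<Longrightarrow> (B has_real_derivative 2 * \<beta> t) (at t within I)"
    and P_deriv: "\<And>t. t \<in> I \<Longrightarrow>
       (P has_real_derivative (g t)\<^sup>2 / f t * exp (- 2 * B t)) (at t within I)"
    and \<I>_deriv: "\<And>t. t \<in> I \<Longrightarrow>
       (\<I> has_real_derivative f t / g t * exp (B t) * H1 t) (at t within I)"
    and J_deriv: "\<And>t. t \<in> I \<Longrightarrow>
       (J has_real_derivative (g t)\<^sup>2 / f t * exp (- 2 * B t) * \<I> t) (at t within I)"
    and L_deriv: "\<And>t. t \<in> I \<Longrightarrow>
       (L has_real_derivative (g t)\<^sup>2 / f t * exp (- 2 * B t) * (\<I> t)\<^sup>2) (at t within I)"
    and M_deriv: "\<And>t. t \<in> I \<Longrightarrow> (M has_real_derivative H2 t) (at t within I)"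
    and a_def: "a = (\<lambda>t. 1 / (4 * f t) *
         (4 * (\<beta> t)\<^sup>2 + 2 * \<beta>' t + 2 * \<beta> t * f' t / f t - 4 * \<beta> t * g' t / g t
          + (f'' t / f t - (f' t / f t)\<^sup>2)
          + (- g'' t / g t + 2 * (g' t / g t)\<^sup>2)
          - (f' t / f t) * (g' t / g t)))"
    and h_def: "h = (\<lambda>x t. complex_of_real (a t * x\<^sup>2 + H1 t * x + H2 t) + \<i> * complex_of_real (\<beta> t))"
    and T_def: "T = (\<lambda>t. T1 * P t + T2)"
    and X_def: "X = (\<lambda>x t. \<epsilon>1 * sqrt T1 * (g t / f t) * exp (- B t) * x
                         - 2 * \<epsilon>1 * sqrt T1 * J t + \<xi>0 * T1 * P t + \<xi>1)"
    and R_def: "R = (\<lambda>t. exp (- B t) * sqrt (\<epsilon> * T1 * (g t / f t)))"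
    and \<theta>_def: "\<theta> = (\<lambda>x t. 1 / (4 * f t) * (2 * \<beta> t + f' t / f t - g' t / g t) * x\<^sup>2
         + (g t / f t) * exp (- B t) * (\<I> t - \<epsilon>1 * \<xi>0 * sqrt T1 / 2) * x
         - L t - \<xi>0\<^sup>2 * T1 / 4 * P t + \<epsilon>1 * \<xi>0 * sqrt T1 * J t + M t + \<theta>0)"
    and D_open: "open D"
    and D_contains: "\<And>x t. t \<in> I \<Longrightarrow> (X x t, T t) \<in> D"
    and sol: "nls_solution \<epsilon> \<psi>t D"
  shows "vnls_solution f g h
           (\<lambda>x t. complex_of_real (R t) * exp (\<i> * complex_of_real (\<theta> x t)) * \<psi>t (X x t) (T t))
           (UNIV \<times> I)"
proof -
  interpret coefficients: vnls_coefficients I f f' f'' g g' g'' \<beta> \<beta>' H1 H2 B P \<I> J L M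
      \<epsilon> \<epsilon>1 T1 T2 \<xi>0 \<xi>1 \<theta>0
    by unfold_locales (fact assms)+
  obtain \<psi>\<^sub>t \<psi>\<^sub>x \<psi>\<^sub>x\<^sub>x where \<psi>: "C12_partials \<psi>t D \<psi>\<^sub>t \<psi>\<^sub>x \<psi>\<^sub>x\<^sub>x"
    and nls: "\<And>y s. (y, s) \<in> D \<Longrightarrow>
      \<i> * \<psi>\<^sub>t y s + \<psi>\<^sub>x\<^sub>x y s + of_real (\<epsilon> * (cmod (\<psi>t y s))\<^sup>2) * \<psi>t y s = 0"
    using sol unfolding nls_solution_def by blast
  have X: "X x t = coefficients.dilation t * x + coefficients.translation t" for x t
    unfolding X_def coefficients.dilation_def coefficients.translation_def by simp
  have T: "T = coefficients.time_change"
    unfolding T_def coefficients.time_change_def by simp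
  interpret sim: similarity_reduction I D \<epsilon> \<psi>t \<psi>\<^sub>t \<psi>\<^sub>x \<psi>\<^sub>x\<^sub>x f g
      coefficients.quadratic_potential H1 H2 \<beta> coefficients.amplitude coefficients.chirp
      coefficients.phase_slope coefficients.phase_offset coefficients.dilation
      coefficients.translation coefficients.time_change
    using coefficients.similarity_reduction_instance[OF D_open _ \<psi> nls] D_contains by (simp add: X T)
  have "h = (\<lambda>x t. of_real (coefficients.quadratic_potential t * x\<^sup>2 + H1 t * x + H2 t)
      + \<i> * of_real (\<beta> t))"
    unfolding h_def a_def coefficients.quadratic_potential_def ..
  moreover have "R = coefficients.amplitude"
    unfolding R_def coefficients.amplitude_def ..
  moreover have "\<theta> = sim.phase"
    unfolding \<theta>_def
    by (simp add: fun_eq_iff sim.phase_def coefficients.chirp_def coefficients.phase_slope_def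
        coefficients.phase_offset_def)
  ultimately show ?thesis
    using sim.vnls_solution unfolding sim.u_def sim.pullback_def sim.X_def X T by simp
qed

end
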